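(* Let $P$ be a finite poset, $\mathbb K$ a field, $R=\mathbb K[\mathcal C(P)]$ and $\omega$ the canonical ideal of $R$. Then for every positive integer $n$, $$\omega^{(n)}=\omega^{n}=\bigoplus_{\xi\in S^{(n)}}\mathbb K\,T^\xi\qquad\text{and}\qquad \omega^{(-n)}=(\omega^{(-1)})^n=\bigoplus_{\xi\in S^{(-n)}}\mathbb K\,T^\xi .$$
   Context: $P^-=P\cup\{-\infty\}$ with $-\infty<z$ for all $z\in P$. For a function $\xi$ and a finite set $B$ in its domain, $\xi^+(B)=\sum_{b\in B}\xi(b)$. The chain polytope is $\mathcal C(P)=\{f\in\mathbb R^P: f(x)\ge 0\ \forall x,\ f^+(C)\le 1$ for every chain $C$ of $P\}$. Let $T_x$ ($x\in P^-$) be indeterminates; for $f\in\mathbb Z^{P^-}$ put $T^f=\prod_{x\in P^-}T_x^{f(x)}$, graded by $\deg T^f=f(-\infty)$. For $n\in\mathbb Z$ let $S^{(n)}=\{\xi\in\mathbb Z^{P^-}: \xi(x)\ge n$ for all $x\in P$, and $\xi(-\infty)\ge \xi^+(C)+n$ for every maximal chain $C$ of $P\}$. The Ehrhart ring is $\mathbb K[\mathcal C(P)]=\bigoplus_{\xi\in S^{(0)}}\mathbb K T^\xi$ (the subring of $\mathbb K[T_x^{\pm1}:x\in P][T_{-\infty}]$ generated by $T^f$ with $f(-\infty)>0$, $f|_P/f(-\infty)\in\mathcal C(P)$), and its canonical ideal is $\omega=\bigoplus_{\xi\in S^{(1)}}\mathbb K T^\xi$ (monomials with $f|_P/f(-\infty)$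 in the relative interior of $\mathcal C(P)$). For $n\in\mathbb Z$, $\omega^{(n)}$ denotes the $n$-th power of $\omega$ in the group of divisorial fractional ideals of $R$, with product $I\cdot J=R:_{Q(R)}(R:_{Q(R)}IJ)$; for $n>0$ it is the $n$-th symbolic power, and $\omega^{(-1)}=R:_{Q(R)}\omega$ is the anticanonical ideal. *)

theory Defs
  imports Main "HOL-Library.Poly_Mapping"
begin

text \<open>Finite poset: a finite carrier P inside a partially ordered type.
  P^- is modelled by 'a option, with None playing the role of -infinity.
  Exponent vectors are finitely supported maps 'a option =>0 int, required to
  vanish outside P^-.  The Laurent polynomial ring is the group ring
  ('a option =>0 int) =>0 'k, monomial T^xi = single xi 1.\<close>

definition is_chain :: "'a::order set \<Rightarrow> 'a set \<Rightarrow> bool" where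
  "is_chain P C \<longleftrightarrow> C \<subseteq> P \<and> (\<forall>x\<in>C. \<forall>y\<in>C. x \<le> y \<or> y \<le> x)"

definition is_max_chain :: "'a::order set \<Rightarrow> 'a set \<Rightarrow> bool" where
  "is_max_chain P C \<longleftrightarrow> is_chain P C \<and> (\<forall>D. is_chain P D \<and> C \<subseteq> D \<longrightarrow> D = C)"

definition xi_plus :: "('a option \<Rightarrow>\<^sub>0 int) \<Rightarrow> 'a set \<Rightarrow> int" where
  "xi_plus \<xi> C = (\<Sum>b\<in>C. Poly_Mapping.lookup \<xi> (Some b))"

definition S_set :: "'a::order set \<Rightarrow> int \<Rightarrow> ('a option \<Rightarrow>\<^sub>0 int) set" where
  "S_set P n = {\<xi>. (\<forall>x. x \<notin> P \<longrightarrow> Poly_Mapping.lookup \<xi> (Some x) = 0)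
                 \<and> (\<forall>x\<in>P. Poly_Mapping.lookup \<xi> (Some x) \<ge> n)
                 \<and> (\<forall>C. is_max_chain P C \<longrightarrow> Poly_Mapping.lookup \<xi> None \<ge> xi_plus \<xi> C + n)}"

definition monspan :: "('b \<Rightarrow>\<^sub>0 int) set \<Rightarrow> (('b \<Rightarrow>\<^sub>0 int) \<Rightarrow>\<^sub>0 'k::field) set" where
  "monspan S = {p. Poly_Mapping.keys p \<subseteq> S}"

text \<open>Fractional-ideal operations inside an ambient field F containing R.\<close>

definition quot_field :: "'f::field set \<Rightarrow> 'f set" where
  "quot_field R = {a / b | a b. a \<in> R \<and> b \<in> R \<and> b \<noteq> 0}"

definition colon :: "'f::field set \<Rightarrow> 'f set \<Rightarrow> 'f set" where
  "colon R I = {x \<in> quot_field R. \<forall>y\<in>I. x * y \<in> R}"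

definition ideal_prod :: "'f::field set \<Rightarrow> 'f set \<Rightarrow> 'f set" where
  "ideal_prod I J = {(\<Sum>i<k. x i * y i) | (k::nat) x y. \<forall>i<k. x i \<in> I \<and> y i \<in> J}"

fun ord_pow :: "'f::field set \<Rightarrow> 'f set \<Rightarrow> nat \<Rightarrow> 'f set" where
  "ord_pow R I 0 = R"
| "ord_pow R I (Suc 0) = I"
| "ord_pow R I (Suc (Suc n)) = ideal_prod (ord_pow R I (Suc n)) I"

text \<open>Product in the group of divisorial fractional ideals: R:(R:IJ).\<close>
definition div_prod :: "'f::field set \<Rightarrow> 'f set \<Rightarrow> 'f set \<Rightarrow> 'f set" where
  "div_prod R I J = colon R (colon R (ideal_prod I J))"

fun div_pow :: "'f::field set \<Rightarrow> 'f set \<Rightarrow> nat \<Rightarrow> 'f set" where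
  "div_pow R I 0 = R"
| "div_pow R I (Suc 0) = I"
| "div_pow R I (Suc (Suc n)) = div_prod R (div_pow R I (Suc n)) I"

end

theory Submission
  imports Defs
begin

text \<open>The monomials of \<open>R\<close> and of the ideals in question are indexed by the exponent sets
  \<open>S_set P k\<close>, so everything reduces to two facts about these sets.
  Products: \<open>S_set P a + S_set P b \<subseteq> S_set P (a + b)\<close>, with equality for \<open>a = s\<close> and
  \<open>b = s * (n - 1)\<close>: an element of \<open>S_set P (s * n)\<close> is split pointwise by rounding the weights
  of its heaviest chains down to multiples of \<open>n\<close>.
  Duality: every defining inequality of \<open>S_set P k\<close> is attained, so \<open>S_set P (- k)\<close> consists
  of the \<open>\<xi>\<close> with \<open>\<xi> + S_set P k \<subseteq> S_set P 0\<close>; hence the colon ideal of the span of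
  \<open>S_set P k\<close> is the span of \<open>S_set P (- k)\<close>, and all these spans are divisorial.
  Induction on \<open>n\<close> then identifies the ordinary and divisorial powers of \<open>\<omega>\<close> and of the
  anticanonical ideal \<open>colon R \<omega>\<close>.\<close>

lemma diff_div_mono:
  fixes a b n :: int
  assumes n: "0 < n" and ab: "a \<le> b"
  shows "a - a div n \<le> b - b div n"
proof -
  define q where "q = b div n - a div n"
  have split: "b - a = n * q + (b mod n - a mod n)"
    unfolding q_def by (simp add: algebra_simps)
  have "a mod n < n" "0 \<le> b mod n" using n by simp_all
  moreover have "q \<le> 0 \<or> 0 \<le> n * q - n - q + 1"
  proof (cases "q \<le> 0")
    case False
    then have "0 \<le> (n - 1) * (q - 1)" using n by simp
    then show ?thesis by (simp add: algebra_simps)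
  qed simp
  ultimately have "q \<le> b - a" using split ab by (elim disjE) linarith+
  then show ?thesis unfolding q_def by simp
qed

lemma div_increment_bounds:
  fixes B d k n :: int
  assumes n: "0 < n" and d: "k * n \<le> d"
  shows "k \<le> (B + d) div n - B div n"
    and "k * (n - 1) \<le> d - ((B + d) div n - B div n)"
proof -
  have shift: "(B + k * n) div n = B div n + k"
    using n by simp
  show "k \<le> (B + d) div n - B div n"
    using zdiv_mono1[of "B + k * n" "B + d" n] n d shift by simp
  show "k * (n - 1) \<le> d - ((B + d) div n - B div n)"
    using diff_div_mono[OF n, of "B + k * n" "B + d"] d shift by (simp add: algebra_simps)
qed

lemma is_chain_insert:
  "is_chain Q C \<Longrightarrow> z \<in> Q \<Longrightarrow> (\<forall>c\<in>C. c \<le> z \<or> z \<le> c) \<Longrightarrow> is_chain Q (insert z C)"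
  by (auto simp: is_chain_def)

lemma is_chain_finite: "is_chain Q C \<Longrightarrow> finite Q \<Longrightarrow> finite C"
  unfolding is_chain_def using finite_subset by blast

lemma finite_max_chains: "finite Q \<Longrightarrow> finite {D. is_max_chain Q D}"
  by (rule finite_subset[of _ "Pow Q"]) (auto simp: is_max_chain_def is_chain_def)

lemma max_chain_extend:
  assumes "finite Q" "is_chain Q C"
  obtains D where "is_max_chain Q D" "C \<subseteq> D"
proof -
  let ?K = "{D. is_chain Q D \<and> C \<subseteq> D}"
  have "finite ?K"
    by (rule finite_subset[of _ "Pow Q"]) (auto simp: is_chain_def assms(1))
  moreover have "?K \<noteq> {}" using assms(2) by auto
  ultimately obtain D where D: "D \<in> ?K" "\<forall>E\<in>?K. D \<subseteq> E \<longrightarrow> D = E"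
    using finite_has_maximal by meson
  then have "is_max_chain Q D" unfolding is_max_chain_def by blast
  with D(1) show thesis using that by blast
qed

lemma ex_max_chain: "finite Q \<Longrightarrow> \<exists>D. is_max_chain Q D"
  using max_chain_extend[of Q "{}"] by (auto simp: is_chain_def)

lemma chain_greatest:
  assumes "is_chain Q C" "finite C" "C \<noteq> {}"
  obtains y where "y \<in> C" "\<forall>c\<in>C. c \<le> y"
proof -
  obtain y where "y \<in> C" "\<forall>c\<in>C. y \<le> c \<longrightarrow> y = c"
    using finite_has_maximal[OF assms(2,3)] by blast
  moreover have "c \<le> y" if "c \<in> C" for c
    using assms(1) that \<open>y \<in> C\<close> \<open>\<forall>c\<in>C. y \<le> c \<longrightarrow> y = c\<close>
    unfolding is_chain_def by (metis order_refl)
  ultimately show thesis using that by blast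
qed

definition downset :: "'a::order set \<Rightarrow> 'a \<Rightarrow> 'a set" where
  "downset P x = {y \<in> P. y \<le> x}"

lemma is_chain_downset_iff: "is_chain (downset P x) C \<longleftrightarrow> is_chain P C \<and> (\<forall>c\<in>C. c \<le> x)"
  by (auto simp: is_chain_def downset_def)

lemma max_chain_downset_mem:
  assumes "x \<in> P" "is_max_chain (downset P x) D"
  shows "x \<in> D"
proof -
  have "is_chain (downset P x) (insert x D)"
    using assms unfolding is_max_chain_def is_chain_def downset_def by auto
  then show ?thesis using assms(2) unfolding is_max_chain_def by blast
qed

lemma max_chain_downset_remove_top:
  assumes fin: "finite P" and x: "x \<in> P" and D: "is_max_chain (downset P x) D"
    and ne: "D - {x} \<noteq> {}"
  obtains y where "y \<in> P" "y < x" "\<forall>z\<in>P. \<not> (y < z \<and> z < x)"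
    "is_max_chain (downset P y) (D - {x})"
proof -
  have Dch: "is_chain P D" "\<forall>d\<in>D. d \<le> x"
    using D by (simp_all add: is_max_chain_def is_chain_downset_iff)
  have Dmax: "\<And>E. is_chain P E \<Longrightarrow> \<forall>e\<in>E. e \<le> x \<Longrightarrow> D \<subseteq> E \<Longrightarrow> E = D"
    using D by (simp add: is_max_chain_def is_chain_downset_iff)
  have "finite (D - {x})" using is_chain_finite[OF Dch(1) fin] by simp
  moreover have "is_chain P (D - {x})" using Dch(1) by (auto simp: is_chain_def)
  ultimately obtain y where y: "y \<in> D - {x}" "\<forall>d\<in>D - {x}. d \<le> y"
    using chain_greatest ne by blast
  have yP: "y \<in> P" and yx: "y < x" using y Dch by (auto simp: is_chain_def)
  have cover: "\<forall>z\<in>P. \<not> (y < z \<and> z < x)"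
  proof (intro ballI notI)
    fix z assume z: "z \<in> P" "y < z \<and> z < x"
    have "\<forall>d\<in>D. d \<le> z \<or> z \<le> d"
    proof
      fix d assume "d \<in> D"
      with y z show "d \<le> z \<or> z \<le> d"
        by (cases "d = x") (auto dest: order.strict_implies_order intro: order.trans)
    qed
    with Dch(1) z(1) have "is_chain P (insert z D)" by (rule is_chain_insert)
    moreover have "\<forall>d\<in>insert z D. d \<le> x" using Dch(2) z(2) by auto
    ultimately have "z \<in> D - {x}" using Dmax[of "insert z D"] z(2) by auto
    then have "z \<le> y" using y(2) by blast
    with z(2) show False by (auto simp: order.strict_iff_not)
  qed
  have "is_max_chain (downset P y) (D - {x})"
    unfolding is_max_chain_def is_chain_downset_iff
  proof (intro conjI allI impI)
    show "is_chain P (D - {x})" "\<forall>c\<in>D - {x}. c \<le> y"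
      using Dch(1) y by (auto simp: is_chain_def)
  next
    fix E assume E: "(is_chain P E \<and> (\<forall>e\<in>E. e \<le> y)) \<and> D - {x} \<subseteq> E"
    then have "is_chain P (insert x E)" and "\<forall>e\<in>insert x E. e \<le> x"
      using x yx by (auto intro!: is_chain_insert dest: order.strict_implies_order intro: order.trans)
    then have "insert x E = D" using Dmax E by blast
    moreover have "x \<notin> E" using E yx by auto
    ultimately show "E = D - {x}" by auto
  qed
  with yP yx cover show thesis using that by blast
qed

lemma max_chain_downset_insert_cover:
  assumes x: "x \<in> P" and y: "y \<in> P" "y < x" and cover: "\<forall>z\<in>P. \<not> (y < z \<and> z < x)"
    and E: "is_max_chain (downset P y) E"
  shows "is_max_chain (downset P x) (insert x E)"
proof -
  have Ech: "is_chain P E" "\<forall>e\<in>E. e \<le> y"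
    using E by (simp_all add: is_max_chain_def is_chain_downset_iff)
  have yE: "y \<in> E" using max_chain_downset_mem[OF y(1) E] .
  show ?thesis
    unfolding is_max_chain_def is_chain_downset_iff
  proof (intro conjI allI impI)
    show "is_chain P (insert x E)" "\<forall>e\<in>insert x E. e \<le> x"
      using Ech x y(2) by (auto intro!: is_chain_insert dest: order.strict_implies_order intro: order.trans)
  next
    fix G assume G: "(is_chain P G \<and> (\<forall>g\<in>G. g \<le> x)) \<and> insert x E \<subseteq> G"
    have "\<forall>g\<in>G - {x}. g \<le> y"
    proof
      fix g assume g: "g \<in> G - {x}"
      then have "g \<in> P" "g < x" "g \<le> y \<or> y \<le> g"
        using G yE unfolding is_chain_def by auto
      with cover show "g \<le> y" by (auto simp: order.order_iff_strict)
    qed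
    moreover have "is_chain P (G - {x})" using G by (auto simp: is_chain_def)
    moreover have "E \<subseteq> G - {x}" using G Ech y(2) by auto
    ultimately have "G - {x} = E"
      using E unfolding is_max_chain_def is_chain_downset_iff by blast
    with G show "G = insert x E" by auto
  qed
qed

definition chain_weight_upto :: "'a::order set \<Rightarrow> ('a option \<Rightarrow>\<^sub>0 int) \<Rightarrow> 'a \<Rightarrow> int" where
  "chain_weight_upto P \<xi> x = Max (xi_plus \<xi> ` {D. is_max_chain (downset P x) D})"

definition chain_weight_below :: "'a::order set \<Rightarrow> ('a option \<Rightarrow>\<^sub>0 int) \<Rightarrow> 'a \<Rightarrow> int" where
  "chain_weight_below P \<xi> x = chain_weight_upto P \<xi> x - Poly_Mapping.lookup \<xi> (Some x)"

lemma finite_downset: "finite P \<Longrightarrow> finite (downset P x)"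
  by (simp add: downset_def)

lemma chain_weight_upto_attained:
  assumes "finite P"
  obtains D where "is_max_chain (downset P x) D" "chain_weight_upto P \<xi> x = xi_plus \<xi> D"
proof -
  let ?W = "xi_plus \<xi> ` {D. is_max_chain (downset P x) D}"
  have "finite ?W" "?W \<noteq> {}"
    using finite_max_chains ex_max_chain finite_downset[OF assms] by auto
  then have "Max ?W \<in> ?W" by (rule Max_in)
  then show thesis using that unfolding chain_weight_upto_def by blast
qed

lemma xi_plus_le_chain_weight_upto:
  "finite P \<Longrightarrow> is_max_chain (downset P x) D \<Longrightarrow> xi_plus \<xi> D \<le> chain_weight_upto P \<xi> x"
  unfolding chain_weight_upto_def
  by (rule Max_ge) (simp_all add: finite_max_chains finite_downset)

lemma chain_weight_below_singleton:
  assumes fin: "finite P" and x: "x \<in> P" and D: "is_max_chain (downset P x) {x}"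
  shows "chain_weight_below P \<xi> x = 0"
proof -
  obtain E where E: "is_max_chain (downset P x) E" "chain_weight_upto P \<xi> x = xi_plus \<xi> E"
    using chain_weight_upto_attained[OF fin] .
  have "x \<in> E" using max_chain_downset_mem[OF x E(1)] .
  then have "E = {x}" using D E(1) unfolding is_max_chain_def by blast
  with E(2) show ?thesis by (simp add: chain_weight_below_def xi_plus_def)
qed

lemma chain_weight_upto_le_below_cover:
  assumes fin: "finite P" and x: "x \<in> P" and y: "y \<in> P" "y < x"
    and cover: "\<forall>z\<in>P. \<not> (y < z \<and> z < x)"
  shows "chain_weight_upto P \<xi> y \<le> chain_weight_below P \<xi> x"
proof -
  obtain E where E: "is_max_chain (downset P y) E" "chain_weight_upto P \<xi> y = xi_plus \<xi> E"
    using chain_weight_upto_attained[OF fin] .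
  have "is_chain P E" "\<forall>e\<in>E. e \<le> y"
    using E(1) by (simp_all add: is_max_chain_def is_chain_downset_iff)
  then have "finite E" "x \<notin> E"
    using is_chain_finite fin y(2) by (auto simp: order.strict_iff_not)
  then have "xi_plus \<xi> (insert x E) = Poly_Mapping.lookup \<xi> (Some x) + xi_plus \<xi> E"
    by (simp add: xi_plus_def)
  moreover have "xi_plus \<xi> (insert x E) \<le> chain_weight_upto P \<xi> x"
    using xi_plus_le_chain_weight_upto[OF fin max_chain_downset_insert_cover[OF x y cover E(1)]] .
  ultimately show ?thesis using E(2) by (simp add: chain_weight_below_def)
qed

text \<open>Consecutive elements of a maximal chain of the down-set of \<open>x\<close> are covers, so
  \<open>chain_weight_below P \<xi> y\<close> is at least \<open>chain_weight_upto P \<xi> y'\<close> for the predecessor \<open>y'\<close>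
  of \<open>y\<close>, and the sum telescopes.\<close>
lemma sum_chain_increments_le:
  fixes \<psi> :: "int \<Rightarrow> int"
  assumes fin: "finite P" and mono: "mono \<psi>"
  shows "x \<in> P \<Longrightarrow> is_max_chain (downset P x) D \<Longrightarrow>
    (\<Sum>y\<in>D. \<psi> (chain_weight_upto P \<xi> y) - \<psi> (chain_weight_below P \<xi> y))
      \<le> \<psi> (chain_weight_upto P \<xi> x) - \<psi> 0"
proof (induction "card D" arbitrary: D x rule: less_induct)
  case less
  let ?inc = "\<lambda>y. \<psi> (chain_weight_upto P \<xi> y) - \<psi> (chain_weight_below P \<xi> y)"
  have xD: "x \<in> D" using max_chain_downset_mem[OF less.prems] .
  have "is_chain P D" using less.prems(2) by (simp add: is_max_chain_def is_chain_downset_iff)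
  then have finD: "finite D" using fin by (rule is_chain_finite)
  have split: "(\<Sum>y\<in>D. ?inc y) = ?inc x + (\<Sum>y\<in>D - {x}. ?inc y)"
    using finD xD by (simp add: sum.remove)
  show ?case
  proof (cases "D - {x} = {}")
    case True
    with xD have "D = {x}" by auto
    with less.prems have "chain_weight_below P \<xi> x = 0"
      using chain_weight_below_singleton[OF fin] by blast
    with split True show ?thesis by simp
  next
    case False
    then obtain y where y: "y \<in> P" "y < x" "\<forall>z\<in>P. \<not> (y < z \<and> z < x)"
      and D': "is_max_chain (downset P y) (D - {x})"
      using max_chain_downset_remove_top[OF fin less.prems] by blast
    have "card (D - {x}) < card D" using finD xD by (rule card_Diff1_less)
    then have "(\<Sum>y\<in>D - {x}. ?inc y) \<le> \<psi> (chain_weight_upto P \<xi> y) - \<psi> 0"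
      using less.hyps[OF _ y(1) D'] by blast
    moreover have "\<psi> (chain_weight_upto P \<xi> y) \<le> \<psi> (chain_weight_below P \<xi> x)"
      using monoD[OF mono chain_weight_upto_le_below_cover[OF fin less.prems(1) y]] .
    ultimately show ?thesis using split by linarith
  qed
qed

lemma max_chain_top:
  assumes fin: "finite P" and C: "is_max_chain P C" and ne: "C \<noteq> {}"
  obtains x where "x \<in> P" "is_max_chain (downset P x) C"
    "\<And>E. is_max_chain (downset P x) E \<Longrightarrow> is_max_chain P E"
proof -
  have Cch: "is_chain P C" and Cmax: "\<And>E. is_chain P E \<Longrightarrow> C \<subseteq> E \<Longrightarrow> E = C"
    using C by (auto simp: is_max_chain_def)
  have "finite C" using is_chain_finite[OF Cch fin] .
  then obtain x where x: "x \<in> C" "\<forall>c\<in>C. c \<le> x"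
    using chain_greatest[OF Cch _ ne] by blast
  have xP: "x \<in> P" using x(1) Cch by (auto simp: is_chain_def)
  have top: "z = x" if "z \<in> P" "x \<le> z" for z
  proof -
    have "is_chain P (insert z C)"
      using Cch that x(2) by (auto intro!: is_chain_insert intro: order.trans)
    then have "z \<in> C" using Cmax by blast
    with x(2) that(2) show ?thesis by (simp add: order.antisym)
  qed
  have "is_max_chain (downset P x) C"
    using Cch Cmax x(2) by (simp add: is_max_chain_def is_chain_downset_iff)
  moreover have "is_max_chain P E" if E: "is_max_chain (downset P x) E" for E
    unfolding is_max_chain_def
  proof (intro conjI allI impI)
    show "is_chain P E" using E by (simp add: is_max_chain_def is_chain_downset_iff)
  next
    fix G assume G: "is_chain P G \<and> E \<subseteq> G"
    have "x \<in> E" using max_chain_downset_mem[OF xP E] .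
    then have "\<forall>g\<in>G. g \<le> x"
      using G top unfolding is_chain_def by blast
    with G show "G = E" using E by (simp add: is_max_chain_def is_chain_downset_iff)
  qed
  ultimately show thesis using that xP by blast
qed

lemma sum_max_chain_increments_le:
  fixes \<psi> :: "int \<Rightarrow> int"
  assumes fin: "finite P" and mono: "mono \<psi>" and C: "is_max_chain P C"
    and K: "\<And>D. is_max_chain P D \<Longrightarrow> xi_plus \<xi> D \<le> K"
  shows "(\<Sum>y\<in>C. \<psi> (chain_weight_upto P \<xi> y) - \<psi> (chain_weight_below P \<xi> y)) \<le> \<psi> K - \<psi> 0"
proof (cases "C = {}")
  case True
  with K[OF C] have "0 \<le> K" by (simp add: xi_plus_def)
  with True show ?thesis using monoD[OF mono] by simp
next
  case False
  then obtain x where x: "x \<in> P" "is_max_chain (downset P x) C"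
    and lift: "\<And>E. is_max_chain (downset P x) E \<Longrightarrow> is_max_chain P E"
    using max_chain_top[OF fin C] by blast
  obtain E where E: "is_max_chain (downset P x) E" "chain_weight_upto P \<xi> x = xi_plus \<xi> E"
    using chain_weight_upto_attained[OF fin] .
  have "\<psi> (chain_weight_upto P \<xi> x) \<le> \<psi> K"
    using monoD[OF mono] K[OF lift[OF E(1)]] E(2) by simp
  with sum_chain_increments_le[OF fin mono x, of \<xi>] show ?thesis by linarith
qed

definition mk_exponent :: "'a set \<Rightarrow> int \<Rightarrow> ('a \<Rightarrow> int) \<Rightarrow> ('a option \<Rightarrow>\<^sub>0 int)" where
  "mk_exponent P c v = Poly_Mapping.single None c + (\<Sum>y\<in>P. Poly_Mapping.single (Some y) (v y))"

lemma lookup_mk_exponent_None: "finite P \<Longrightarrow> Poly_Mapping.lookup (mk_exponent P c v) None = c"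
  by (simp add: mk_exponent_def lookup_add lookup_sum lookup_single)

lemma lookup_mk_exponent_Some:
  "finite P \<Longrightarrow> Poly_Mapping.lookup (mk_exponent P c v) (Some x) = (if x \<in> P then v x else 0)"
  by (simp add: mk_exponent_def lookup_add lookup_sum lookup_single when_def)

lemma mk_exponent_in_S_set_iff:
  assumes "finite P"
  shows "mk_exponent P c v \<in> S_set P k \<longleftrightarrow>
    (\<forall>x\<in>P. k \<le> v x) \<and> (\<forall>C. is_max_chain P C \<longrightarrow> sum v C + k \<le> c)"
proof -
  have "xi_plus (mk_exponent P c v) C = sum v C" if "is_max_chain P C" for C
    using that assms unfolding xi_plus_def is_max_chain_def is_chain_def
    by (intro sum.cong) (auto simp: lookup_mk_exponent_Some)
  then show ?thesis
    using assms by (auto simp: S_set_def lookup_mk_exponent_None lookup_mk_exponent_Some)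
qed

lemma S_set_add: "\<xi> \<in> S_set P a \<Longrightarrow> \<eta> \<in> S_set P b \<Longrightarrow> \<xi> + \<eta> \<in> S_set P (a + b)"
  by (fastforce simp: S_set_def lookup_add xi_plus_def sum.distrib)

lemma S_set_antimono: "a \<le> b \<Longrightarrow> S_set P b \<subseteq> S_set P a"
  unfolding S_set_def by force

lemma S_set_tight_point:
  assumes fin: "finite P" and x: "x \<in> P"
  obtains \<mu> where "\<mu> \<in> S_set P k" "Poly_Mapping.lookup \<mu> (Some x) = k"
proof -
  let ?\<mu> = "mk_exponent P (\<bar>k\<bar> * (int (card P) + 1)) (\<lambda>_. k)"
  have "int (card C) * k + k \<le> \<bar>k\<bar> * (int (card P) + 1)" if "C \<subseteq> P" for C
  proof -
    have "k * (int (card C) + 1) \<le> \<bar>k\<bar> * (int (card C) + 1)"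
      by (intro mult_right_mono) auto
    also have "\<dots> \<le> \<bar>k\<bar> * (int (card P) + 1)"
      using card_mono[OF fin that] by (intro mult_left_mono) auto
    finally show ?thesis by (simp add: algebra_simps)
  qed
  then have "?\<mu> \<in> S_set P k"
    using fin by (simp add: mk_exponent_in_S_set_iff is_max_chain_def is_chain_def)
  with that show thesis using fin x by (simp add: lookup_mk_exponent_Some)
qed

text \<open>The witness puts a large weight \<open>M\<close> on the points of \<open>C\<close>, so that every other maximal
  chain, which misses a point of \<open>C\<close>, is lighter than \<open>C\<close>.\<close>
lemma S_set_tight_chain:
  assumes fin: "finite P" and C: "is_max_chain P C"
  obtains \<mu> where "\<mu> \<in> S_set P k" "Poly_Mapping.lookup \<mu> None = xi_plus \<mu> C + k"
proof -
  define M where "M = \<bar>k\<bar> * int (card P)"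
  define v where "v y = k + (if y \<in> C then M else 0)" for y
  let ?\<mu> = "mk_exponent P (sum v C + k) v"
  have CP: "C \<subseteq> P" using C by (simp add: is_max_chain_def is_chain_def)
  have sum_v: "sum v D = k * int (card D) + M * int (card (D \<inter> C))" if "finite D" for D
    using that by (simp add: v_def sum.distrib sum.If_cases Int_def)
  have "sum v D \<le> sum v C" if D: "is_max_chain P D" for D
  proof (cases "D = C")
    case False
    have DP: "D \<subseteq> P" using D by (simp add: is_max_chain_def is_chain_def)
    have "\<not> C \<subseteq> D" using C D False unfolding is_max_chain_def by blast
    then have "card (D \<inter> C) < card C"
      using finite_subset[OF CP fin] by (intro psubset_card_mono) auto
    then have "M * int (card (D \<inter> C)) \<le> M * (int (card C) - 1)"
      unfolding M_def by (intro mult_left_mono) auto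
    moreover have "k * (int (card D) - int (card C)) \<le> M"
    proof -
      have "k * (int (card D) - int (card C)) \<le> \<bar>k\<bar> * \<bar>int (card D) - int (card C)\<bar>"
        by (metis abs_ge_self abs_mult)
      also have "\<dots> \<le> M"
        using card_mono[OF fin DP] card_mono[OF fin CP] unfolding M_def
        by (intro mult_left_mono) auto
      finally show ?thesis .
    qed
    moreover have "sum v D = k * int (card D) + M * int (card (D \<inter> C))"
      "sum v C = k * int (card C) + M * int (card C)"
      using sum_v finite_subset[OF DP fin] finite_subset[OF CP fin] by simp_all
    ultimately show ?thesis by (simp add: algebra_simps)
  qed simp
  moreover have "\<forall>x\<in>P. k \<le> v x" by (simp add: v_def M_def)
  ultimately have "?\<mu> \<in> S_set P k"
    using fin by (simp add: mk_exponent_in_S_set_iff)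
  moreover have "xi_plus ?\<mu> C = sum v C"
    using fin CP unfolding xi_plus_def by (intro sum.cong) (auto simp: lookup_mk_exponent_Some)
  ultimately show thesis using that fin by (simp add: lookup_mk_exponent_None)
qed

lemma S_set_nonempty:
  assumes "finite P"
  shows "S_set P k \<noteq> {}"
proof -
  obtain C where "is_max_chain P C" using ex_max_chain[OF assms] ..
  show ?thesis by (rule S_set_tight_chain[OF assms \<open>is_max_chain P C\<close>]) auto
qed

lemma S_set_uminus:
  assumes fin: "finite P"
  shows "S_set P (- k) = {\<xi>. \<forall>\<mu>\<in>S_set P k. \<xi> + \<mu> \<in> S_set P 0}"
proof (intro equalityI subsetI CollectI ballI)
  fix \<xi> \<mu> assume "\<xi> \<in> S_set P (- k)" "\<mu> \<in> S_set P k"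
  from S_set_add[OF this] show "\<xi> + \<mu> \<in> S_set P 0" by simp
next
  fix \<xi> assume "\<xi> \<in> {\<xi>. \<forall>\<mu>\<in>S_set P k. \<xi> + \<mu> \<in> S_set P 0}"
  then have H: "\<xi> + \<mu> \<in> S_set P 0" if "\<mu> \<in> S_set P k" for \<mu>
    using that by blast
  obtain \<mu>0 where \<mu>0: "\<mu>0 \<in> S_set P k" using S_set_nonempty[OF fin] by blast
  show "\<xi> \<in> S_set P (- k)"
    unfolding S_set_def
  proof (intro CollectI conjI allI ballI impI)
    fix x assume "x \<notin> P"
    with H[OF \<mu>0] \<mu>0 show "Poly_Mapping.lookup \<xi> (Some x) = 0"
      by (simp add: S_set_def lookup_add)
  next
    fix x assume x: "x \<in> P"
    obtain \<mu> where \<mu>: "\<mu> \<in> S_set P k" "Poly_Mapping.lookup \<mu> (Some x) = k"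
      using S_set_tight_point[OF fin x] .
    have "0 \<le> Poly_Mapping.lookup (\<xi> + \<mu>) (Some x)"
      using H[OF \<mu>(1)] x by (simp add: S_set_def)
    with \<mu>(2) show "- k \<le> Poly_Mapping.lookup \<xi> (Some x)"
      by (simp add: lookup_add)
  next
    fix C assume C: "is_max_chain P C"
    obtain \<mu> where \<mu>: "\<mu> \<in> S_set P k" "Poly_Mapping.lookup \<mu> None = xi_plus \<mu> C + k"
      using S_set_tight_chain[OF fin C] .
    have "xi_plus (\<xi> + \<mu>) C \<le> Poly_Mapping.lookup (\<xi> + \<mu>) None"
      using H[OF \<mu>(1)] C by (simp add: S_set_def)
    with \<mu>(2) show "xi_plus \<xi> C + - k \<le> Poly_Mapping.lookup \<xi> None"
      by (simp add: lookup_add xi_plus_def sum.distrib)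
  qed
qed

text \<open>At \<open>x\<close> the first summand is the increase of \<open>w div n\<close> as \<open>w\<close> goes from
  \<open>chain_weight_below P \<xi> x\<close> to \<open>chain_weight_upto P \<xi> x\<close>, the second one that of
  \<open>w - w div n\<close>; both telescope along maximal chains.\<close>
lemma S_set_mult_decompose:
  fixes s n :: int
  assumes fin: "finite P" and n: "0 < n" and \<xi>: "\<xi> \<in> S_set P (s * n)"
  obtains \<zeta> \<eta> where "\<zeta> \<in> S_set P s" "\<eta> \<in> S_set P (s * (n - 1))" "\<xi> = \<zeta> + \<eta>"
proof -
  define N where "N = Poly_Mapping.lookup \<xi> None"
  define K where "K = N - s * n"
  define f where "f x = Poly_Mapping.lookup \<xi> (Some x)" for x
  define h where "h x = chain_weight_upto P \<xi> x div n - chain_weight_below P \<xi> x div n" for x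
  have upto_eq: "chain_weight_upto P \<xi> x = chain_weight_below P \<xi> x + f x" for x
    by (simp add: chain_weight_below_def f_def)
  have K: "xi_plus \<xi> D \<le> K" if "is_max_chain P D" for D
    using \<xi> that unfolding S_set_def K_def N_def by force
  have mono_div: "mono (\<lambda>w::int. w div n)"
    using n by (auto intro: monoI zdiv_mono1)
  have mono_diff_div: "mono (\<lambda>w::int. w - w div n)"
    using n by (auto intro: monoI diff_div_mono)
  have pointwise: "s \<le> h x" "s * (n - 1) \<le> f x - h x" if "x \<in> P" for x
  proof -
    have "s * n \<le> f x" using \<xi> that unfolding S_set_def f_def by blast
    from div_increment_bounds[OF n this, of "chain_weight_below P \<xi> x"]
    show "s \<le> h x" "s * (n - 1) \<le> f x - h x" by (simp_all add: h_def upto_eq add.commute)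
  qed
  let ?\<zeta> = "mk_exponent P (K div n + s) h"
  let ?\<eta> = "mk_exponent P (N - K div n - s) (\<lambda>x. f x - h x)"
  have "sum h C \<le> K div n" if "is_max_chain P C" for C
    using sum_max_chain_increments_le[OF fin mono_div that K] by (simp add: h_def)
  then have "?\<zeta> \<in> S_set P s"
    using fin pointwise by (simp add: mk_exponent_in_S_set_iff)
  moreover have "sum (\<lambda>x. f x - h x) C \<le> K - K div n" if "is_max_chain P C" for C
    using sum_max_chain_increments_le[OF fin mono_diff_div that K]
    by (simp add: h_def upto_eq algebra_simps)
  then have "?\<eta> \<in> S_set P (s * (n - 1))"
    unfolding mk_exponent_in_S_set_iff[OF fin] using pointwise by (fastforce simp: K_def algebra_simps)
  moreover have "\<xi> = ?\<zeta> + ?\<eta>"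
  proof (rule poly_mapping_eqI)
    fix i show "Poly_Mapping.lookup \<xi> i = Poly_Mapping.lookup (?\<zeta> + ?\<eta>) i"
      using \<xi> fin
      by (cases i) (auto simp: S_set_def lookup_add lookup_mk_exponent_None
          lookup_mk_exponent_Some N_def f_def)
  qed
  ultimately show thesis using that by blast
qed

lemma ideal_prod_subset:
  assumes zero: "0 \<in> M" and add: "\<And>u v. u \<in> M \<Longrightarrow> v \<in> M \<Longrightarrow> u + v \<in> M"
    and mult: "\<And>x y. x \<in> I \<Longrightarrow> y \<in> J \<Longrightarrow> x * y \<in> M"
  shows "ideal_prod I J \<subseteq> M"
proof
  fix z assume "z \<in> ideal_prod I J"
  then obtain k :: nat and x y where z: "z = (\<Sum>i<k. x i * y i)" and xy: "\<forall>i<k. x i \<in> I \<and> y i \<in> J"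
    unfolding ideal_prod_def by force
  have "(\<Sum>i<m. x i * y i) \<in> M" if "m \<le> k" for m
    using that by (induction m) (auto intro!: zero add mult simp: xy)
  then show "z \<in> M" using z by blast
qed

lemma sum_mult_mem_ideal_prod:
  assumes fin: "finite A" and xy: "\<And>a. a \<in> A \<Longrightarrow> x a \<in> I \<and> y a \<in> J"
  shows "(\<Sum>a\<in>A. x a * y a) \<in> ideal_prod I J"
proof -
  obtain g where g: "bij_betw g {..<card A} A"
    using ex_bij_betw_nat_finite[OF fin] by (auto simp: atLeast0LessThan)
  have "(\<Sum>a\<in>A. x a * y a) = (\<Sum>i<card A. x (g i) * y (g i))"
    using sum.reindex_bij_betw[OF g, of "\<lambda>a. x a * y a"] by simp
  moreover have "\<forall>i<card A. x (g i) \<in> I \<and> y (g i) \<in> J"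
    using xy bij_betwE[OF g] by blast
  ultimately show ?thesis
    unfolding ideal_prod_def
    by (intro CollectI exI[of _ "card A"] exI[of _ "x \<circ> g"] exI[of _ "y \<circ> g"]) simp
qed

lemma poly_mapping_sum_single:
  "p = (\<Sum>k\<in>Poly_Mapping.keys p. Poly_Mapping.single k (Poly_Mapping.lookup p k))"
proof (rule poly_mapping_eqI)
  fix j
  have "(\<Sum>k\<in>Poly_Mapping.keys p. Poly_Mapping.lookup p k when k = j) = Poly_Mapping.lookup p j"
    by (cases "j \<in> Poly_Mapping.keys p") (simp_all add: when_def sum.delta in_keys_iff)
  then show "Poly_Mapping.lookup p j =
      Poly_Mapping.lookup (\<Sum>k\<in>Poly_Mapping.keys p. Poly_Mapping.single k (Poly_Mapping.lookup p k)) j"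
    by (simp add: lookup_sum lookup_single)
qed

lemma lookup_mult_single_add:
  fixes p :: "'g::cancel_comm_monoid_add \<Rightarrow>\<^sub>0 'k::comm_semiring_1"
  shows "Poly_Mapping.lookup (p * Poly_Mapping.single \<mu> 1) (k + \<mu>) = Poly_Mapping.lookup p k"
proof -
  have "Poly_Mapping.lookup (p * Poly_Mapping.single \<mu> 1) (k + \<mu>)
      = (\<Sum>c\<in>Poly_Mapping.keys p. Poly_Mapping.lookup p c when c + \<mu> = k + \<mu>)"
    by (subst poly_mapping_sum_single[of p])
      (simp add: sum_distrib_right mult_single lookup_sum lookup_single)
  also have "\<dots> = Poly_Mapping.lookup p k"
    by (cases "k \<in> Poly_Mapping.keys p") (simp_all add: when_def sum.delta in_keys_iff)
  finally show ?thesis .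
qed

lemma monspan_add: "p \<in> monspan A \<Longrightarrow> q \<in> monspan A \<Longrightarrow> p + q \<in> monspan A"
  unfolding monspan_def using keys_add[of p q] by blast

lemma single_in_monspan: "a \<in> A \<Longrightarrow> Poly_Mapping.single a c \<in> monspan A"
  by (simp add: monspan_def)

lemma monspan_mult:
  assumes "\<And>a b. a \<in> A \<Longrightarrow> b \<in> B \<Longrightarrow> a + b \<in> C" "p \<in> monspan A" "q \<in> monspan B"
  shows "p * q \<in> monspan C"
proof -
  have "Poly_Mapping.keys (p * q) \<subseteq> {a + b | a b. a \<in> Poly_Mapping.keys p \<and> b \<in> Poly_Mapping.keys q}"
    by (rule keys_mult)
  also have "\<dots> \<subseteq> C" using assms by (auto simp: monspan_def)
  finally show ?thesis by (simp add: monspan_def)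
qed

locale group_ring_embedding =
  fixes \<phi> :: "(('b \<Rightarrow>\<^sub>0 int) \<Rightarrow>\<^sub>0 'k::field) \<Rightarrow> 'f::field"
  assumes map_add: "\<phi> (p + q) = \<phi> p + \<phi> q"
    and map_mult: "\<phi> (p * q) = \<phi> p * \<phi> q"
    and map_one: "\<phi> 1 = 1"
    and inj: "inj \<phi>"
begin

lemma map_zero: "\<phi> 0 = 0"
proof -
  have "\<phi> 0 + \<phi> 0 = \<phi> 0 + 0" using map_add[of 0 0] by simp
  then show ?thesis by (rule add_left_imp_eq)
qed

lemma map_sum: "\<phi> (\<Sum>i\<in>A. g i) = (\<Sum>i\<in>A. \<phi> (g i))"
  by (induction A rule: infinite_finite_induct) (simp_all add: map_zero map_add)

lemma map_single_inverse:
  "\<phi> (Poly_Mapping.single \<mu> 1) * \<phi> (Poly_Mapping.single (- \<mu>) 1) = 1"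
  by (simp flip: map_mult add: mult_single map_one)

lemma map_single_nonzero: "\<phi> (Poly_Mapping.single \<mu> 1) \<noteq> 0"
  using map_single_inverse[of \<mu>] by auto

lemma ideal_prod_image_monspan:
  assumes C: "C = {a + b | a b. a \<in> A \<and> b \<in> B}"
  shows "ideal_prod (\<phi> ` monspan A) (\<phi> ` monspan B) = \<phi> ` monspan C"
proof
  show "ideal_prod (\<phi> ` monspan A) (\<phi> ` monspan B) \<subseteq> \<phi> ` monspan C"
  proof (rule ideal_prod_subset)
    have "0 \<in> monspan C" by (simp add: monspan_def)
    then show "0 \<in> \<phi> ` monspan C" using map_zero by (metis image_eqI)
    show "u + v \<in> \<phi> ` monspan C" if uv: "u \<in> \<phi> ` monspan C" "v \<in> \<phi> ` monspan C" for u v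
    proof -
      obtain p q where "p \<in> monspan C" "q \<in> monspan C" "u = \<phi> p" "v = \<phi> q"
        using uv by blast
      then show ?thesis using monspan_add[of p C q] by (simp flip: map_add)
    qed
    show "x * y \<in> \<phi> ` monspan C" if xy: "x \<in> \<phi> ` monspan A" "y \<in> \<phi> ` monspan B" for x y
    proof -
      obtain p q where pq: "p \<in> monspan A" "q \<in> monspan B" and "x = \<phi> p" "y = \<phi> q"
        using xy by blast
      moreover have "p * q \<in> monspan C"
        by (rule monspan_mult[OF _ pq]) (auto simp: C)
      ultimately show ?thesis by (simp flip: map_mult)
    qed
  qed
next
  show "\<phi> ` monspan C \<subseteq> ideal_prod (\<phi> ` monspan A) (\<phi> ` monspan B)"
  proof
    fix z assume "z \<in> \<phi> ` monspan C"
    then obtain p where p: "Poly_Mapping.keys p \<subseteq> C" "z = \<phi> p"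
      unfolding monspan_def by blast
    have "\<forall>c\<in>C. \<exists>a\<in>A. \<exists>b\<in>B. c = a + b" unfolding C by blast
    then obtain a b where ab: "\<forall>c\<in>C. a c \<in> A \<and> b c \<in> B \<and> c = a c + b c"
      by metis
    let ?x = "\<lambda>c. \<phi> (Poly_Mapping.single (a c) (Poly_Mapping.lookup p c))"
    let ?y = "\<lambda>c. \<phi> (Poly_Mapping.single (b c) 1)"
    have "z = (\<Sum>c\<in>Poly_Mapping.keys p. \<phi> (Poly_Mapping.single c (Poly_Mapping.lookup p c)))"
      by (subst p(2), subst poly_mapping_sum_single) (rule map_sum)
    also have "\<dots> = (\<Sum>c\<in>Poly_Mapping.keys p. ?x c * ?y c)"
    proof (rule sum.cong)
      fix c assume "c \<in> Poly_Mapping.keys p"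
      then have "c = a c + b c" using p(1) ab by blast
      then have "Poly_Mapping.single c (Poly_Mapping.lookup p c) =
          Poly_Mapping.single (a c) (Poly_Mapping.lookup p c) * Poly_Mapping.single (b c) 1"
        by (simp add: mult_single)
      then show "\<phi> (Poly_Mapping.single c (Poly_Mapping.lookup p c)) = ?x c * ?y c"
        by (simp add: map_mult)
    qed simp
    also have "\<dots> \<in> ideal_prod (\<phi> ` monspan A) (\<phi> ` monspan B)"
    proof (rule sum_mult_mem_ideal_prod)
      fix c assume "c \<in> Poly_Mapping.keys p"
      then have "a c \<in> A" "b c \<in> B" using p(1) ab by blast+
      then show "?x c \<in> \<phi> ` monspan A \<and> ?y c \<in> \<phi> ` monspan B"
        by (blast intro: single_in_monspan)
    qed simp
    finally show "z \<in> ideal_prod (\<phi> ` monspan A) (\<phi> ` monspan B)" .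
  qed
qed

lemma colon_image_monspan:
  assumes D: "D = {\<xi>. \<forall>\<mu>\<in>B. \<xi> + \<mu> \<in> A}" and \<mu>0: "\<mu>0 \<in> A" "\<mu>0 \<in> B"
  shows "colon (\<phi> ` monspan A) (\<phi> ` monspan B) = \<phi> ` monspan D"
proof
  show "colon (\<phi> ` monspan A) (\<phi> ` monspan B) \<subseteq> \<phi> ` monspan D"
  proof
    fix x assume "x \<in> colon (\<phi> ` monspan A) (\<phi> ` monspan B)"
    then have shift: "\<exists>r\<in>monspan A. x * \<phi> (Poly_Mapping.single \<mu> 1) = \<phi> r" if "\<mu> \<in> B" for \<mu>
      using that single_in_monspan[of \<mu> B 1] unfolding colon_def by blast
    then obtain r0 where r0: "x * \<phi> (Poly_Mapping.single \<mu>0 1) = \<phi> r0"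
      using \<mu>0(2) by blast
    define q where "q = r0 * Poly_Mapping.single (- \<mu>0) 1"
    have x: "x = \<phi> q"
      using map_single_inverse[of \<mu>0]
      by (simp add: q_def map_mult mult.assoc flip: r0)
    have "\<xi> \<in> D" if \<xi>: "\<xi> \<in> Poly_Mapping.keys q" for \<xi>
    proof -
      have "\<xi> + \<mu> \<in> A" if \<mu>: "\<mu> \<in> B" for \<mu>
      proof -
        obtain r where r: "r \<in> monspan A" "\<phi> (q * Poly_Mapping.single \<mu> 1) = \<phi> r"
          using shift[OF \<mu>] by (auto simp: x map_mult)
        then have "r = q * Poly_Mapping.single \<mu> 1" using inj by (simp add: inj_eq)
        moreover have "Poly_Mapping.lookup (q * Poly_Mapping.single \<mu> 1) (\<xi> + \<mu>) \<noteq> 0"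
          using \<xi> by (simp add: lookup_mult_single_add in_keys_iff)
        ultimately show ?thesis using r(1) by (auto simp: monspan_def in_keys_iff)
      qed
      then show ?thesis using D by blast
    qed
    then have "q \<in> monspan D" by (auto simp: monspan_def)
    with x show "x \<in> \<phi> ` monspan D" by blast
  qed
next
  show "\<phi> ` monspan D \<subseteq> colon (\<phi> ` monspan A) (\<phi> ` monspan B)"
  proof
    fix x assume "x \<in> \<phi> ` monspan D"
    then obtain p where p: "p \<in> monspan D" "x = \<phi> p" by blast
    have closed: "p * q \<in> monspan A" if "q \<in> monspan B" for q
      by (rule monspan_mult[OF _ p(1) that]) (simp add: D)
    have "x = \<phi> (p * Poly_Mapping.single \<mu>0 1) / \<phi> (Poly_Mapping.single \<mu>0 1)"
      using map_single_nonzero[of \<mu>0] by (simp add: p(2) map_mult)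
    then have "x \<in> quot_field (\<phi> ` monspan A)"
      unfolding quot_field_def
      using closed[OF single_in_monspan[OF \<mu>0(2)]] single_in_monspan[OF \<mu>0(1)] map_single_nonzero
      by blast
    moreover have "x * y \<in> \<phi> ` monspan A" if "y \<in> \<phi> ` monspan B" for y
      using that closed by (auto simp: p(2) simp flip: map_mult)
    ultimately show "x \<in> colon (\<phi> ` monspan A) (\<phi> ` monspan B)"
      unfolding colon_def by blast
  qed
qed

end

lemma colon_S_set:
  assumes fin: "finite P" and emb: "group_ring_embedding \<phi>"
  shows "colon (\<phi> ` monspan (S_set P 0)) (\<phi> ` monspan (S_set P k)) = \<phi> ` monspan (S_set P (- k))"
proof -
  obtain \<mu> where \<mu>: "\<mu> \<in> S_set P (max k 0)" using S_set_nonempty[OF fin] by blast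
  show ?thesis
  proof (rule group_ring_embedding.colon_image_monspan[OF emb])
    show "\<mu> \<in> S_set P 0" "\<mu> \<in> S_set P k"
      using \<mu> S_set_antimono[of 0 "max k 0" P] S_set_antimono[of k "max k 0" P] by auto
  qed (rule S_set_uminus[OF fin])
qed

lemma ideal_prod_S_set:
  fixes j s :: int
  assumes fin: "finite P" and emb: "group_ring_embedding \<phi>" and j: "0 \<le> j"
  shows "ideal_prod (\<phi> ` monspan (S_set P (s * j))) (\<phi> ` monspan (S_set P s))
    = \<phi> ` monspan (S_set P (s * (j + 1)))"
proof (rule group_ring_embedding.ideal_prod_image_monspan[OF emb])
  show "S_set P (s * (j + 1)) = {a + b | a b. a \<in> S_set P (s * j) \<and> b \<in> S_set P s}"
  proof (intro equalityI subsetI)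
    fix \<xi> assume \<xi>: "\<xi> \<in> S_set P (s * (j + 1))"
    from j have "0 < j + 1" by simp
    from S_set_mult_decompose[OF fin this \<xi>] obtain \<zeta> \<eta>
      where "\<zeta> \<in> S_set P s" "\<eta> \<in> S_set P (s * j)" "\<xi> = \<zeta> + \<eta>"
      by auto
    then show "\<xi> \<in> {a + b | a b. a \<in> S_set P (s * j) \<and> b \<in> S_set P s}"
      by (auto simp: add.commute)
  next
    fix \<xi> assume "\<xi> \<in> {a + b | a b. a \<in> S_set P (s * j) \<and> b \<in> S_set P s}"
    then show "\<xi> \<in> S_set P (s * (j + 1))"
      using S_set_add[of _ P "s * j" _ s] by (auto simp: algebra_simps)
  qed
qed

lemma ord_pow_S_set:
  assumes fin: "finite P" and emb: "group_ring_embedding \<phi>"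
  shows "ord_pow R (\<phi> ` monspan (S_set P s)) (Suc m) = \<phi> ` monspan (S_set P (s * (int m + 1)))"
proof (induction m)
  case (Suc m)
  then show ?case
    using ideal_prod_S_set[OF fin emb, of "int m + 1" s] by simp
qed simp

lemma div_pow_S_set:
  assumes fin: "finite P" and emb: "group_ring_embedding \<phi>"
  shows "div_pow (\<phi> ` monspan (S_set P 0)) (\<phi> ` monspan (S_set P s)) (Suc m)
    = \<phi> ` monspan (S_set P (s * (int m + 1)))"
proof (induction m)
  case (Suc m)
  then show ?case
    using ideal_prod_S_set[OF fin emb, of "int m + 1" s] colon_S_set[OF fin emb]
    by (simp add: div_prod_def)
qed simp

theorem mainTheorem1:
  fixes P :: "'a::order set"
    and \<phi> :: "(('a option \<Rightarrow>\<^sub>0 int) \<Rightarrow>\<^sub>0 'k::field) \<Rightarrow> 'f::field"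
    and n :: nat
  assumes finP: "finite P"
    and hom_add: "\<And>p q. \<phi> (p + q) = \<phi> p + \<phi> q"
    and hom_mult: "\<And>p q. \<phi> (p * q) = \<phi> p * \<phi> q"
    and hom_one: "\<phi> 1 = 1"
    and inj: "inj \<phi>"
    and npos: "n \<ge> 1"
  defines "R \<equiv> \<phi> ` monspan (S_set P 0)"
    and "\<omega> \<equiv> \<phi> ` monspan (S_set P 1)"
  shows "div_pow R \<omega> n = ord_pow R \<omega> n
       \<and> ord_pow R \<omega> n = \<phi> ` monspan (S_set P (int n))
       \<and> div_pow R (colon R \<omega>) n = ord_pow R (colon R \<omega>) n
       \<and> ord_pow R (colon R \<omega>) n = \<phi> ` monspan (S_set P (- int n))"
proof -
  have emb: "group_ring_embedding \<phi>"
    using hom_add hom_mult hom_one inj by unfold_locales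
  obtain m where n: "n = Suc m" using npos by (cases n) auto
  have anti: "colon R \<omega> = \<phi> ` monspan (S_set P (- 1))"
    unfolding R_def \<omega>_def using colon_S_set[OF finP emb, of 1] by simp
  show ?thesis
    unfolding anti unfolding R_def \<omega>_def n
    using ord_pow_S_set[OF finP emb] div_pow_S_set[OF finP emb] by (simp add: add.commute)
qed

end
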